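(* There exists $C\in(0,\infty)$ such that for all $N\in\mathbb N$, $\lambda\in(0,\infty)$, $n\in\mathbb N$ with $U_{N,\lambda}(n)>0$, and $M>0$, $$\sum_{x\in\mathbb Z^d:\,|x|>M\sqrt n}\frac{\mathbf U_{N,\lambda}(n,x)}{U_{N,\lambda}(n)}\le\frac{C}{M^2}.$$
   Context: Setting: $d\in\mathbb N$, $\mathsf c>0$; positive $r(n)=\frac an(1+o(1))$, $R_N=\sum_{n\le N}r(n)$; probability kernels $p(n,\cdot)$ on $\mathbb Z^d$ with (i) $\sum_xx_ip(n,x)=0$ for each $i$, (ii) $\sum_x|x|^2p(n,x)=O(n)$, (iii) $\sup_x|n^{d/2}p(n,x)-g_{\mathsf c}(x/\sqrt n)|=o(1)$ with $g_t(x)=(2\pi t)^{-d/2}e^{-|x|^2/(2t)}$. $(T^{(N)}_i,X^{(N)}_i)$ i.i.d. with law $\frac{r(n)p(n,x)}{R_N}\mathbf1_{\{1,\dots,N\}}(n)$; $\tau^{(N)}_k$, $S^{(N)}_k$ their partial sums. $\mathbf U_{N,\lambda}(n,x):=\sum_{k\ge0}\lambda^k\P(\tau^{(N)}_k=n,S^{(N)}_k=x)$ and $U_{N,\lambda}(n):=\sum_{k\ge0}\lambda^k\P(\tau^{(N)}_k=n)=\sum_x\mathbf U_{N,\lambda}(n,x)$. *)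

theory Defs
  imports "HOL-Analysis.Analysis"
begin

text \<open>Points of Z^d are functions from a finite index type 'd (with d = CARD('d)) to int.\<close>

definition znorm :: "('d::finite \<Rightarrow> int) \<Rightarrow> real" where
  "znorm x = sqrt (\<Sum>i\<in>UNIV. (real_of_int (x i))^2)"

definition gauss_at :: "real \<Rightarrow> nat \<Rightarrow> ('d::finite \<Rightarrow> int) \<Rightarrow> real" where
  "gauss_at t n x = (2 * pi * t) powr (- real CARD('d) / 2)
      * exp (- ((\<Sum>i\<in>UNIV. (real_of_int (x i) / sqrt (real n))^2)) / (2 * t))"

definition RR :: "(nat \<Rightarrow> real) \<Rightarrow> nat \<Rightarrow> real" where
  "RR r N = (\<Sum>n=1..N. r n)"

text \<open>Joint law of (T^(N), X^(N)): r(n) p(n,x) / R_N on {1..N} x Z^d.\<close>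
definition stepLaw :: "(nat \<Rightarrow> real) \<Rightarrow> (nat \<Rightarrow> ('d::finite \<Rightarrow> int) \<Rightarrow> real) \<Rightarrow> nat
    \<Rightarrow> nat \<Rightarrow> ('d \<Rightarrow> int) \<Rightarrow> real" where
  "stepLaw r p N n x = (if 1 \<le> n \<and> n \<le> N then r n * p n x / RR r N else 0)"

text \<open>Law of (tau_k, S_k): k-fold convolution power of the step law
  (law of the sum of k i.i.d. copies; tau_{k+1} = tau_k + T_{k+1}).\<close>
fun convPow :: "(nat \<Rightarrow> ('d::finite \<Rightarrow> int) \<Rightarrow> real) \<Rightarrow> nat \<Rightarrow> nat \<Rightarrow> ('d \<Rightarrow> int) \<Rightarrow> real" where
  "convPow q 0 = (\<lambda>n x. if n = 0 \<and> x = (\<lambda>_. 0) then 1 else 0)"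
| "convPow q (Suc k) = (\<lambda>n x. \<Sum>m\<le>n. infsum (\<lambda>y. convPow q k m y * q (n - m) (\<lambda>i. x i - y i)) UNIV)"

definition probTS :: "(nat \<Rightarrow> real) \<Rightarrow> (nat \<Rightarrow> ('d::finite \<Rightarrow> int) \<Rightarrow> real) \<Rightarrow> nat
    \<Rightarrow> nat \<Rightarrow> nat \<Rightarrow> ('d \<Rightarrow> int) \<Rightarrow> real" where
  "probTS r p N k n x = convPow (stepLaw r p N) k n x"

definition probT :: "(nat \<Rightarrow> real) \<Rightarrow> (nat \<Rightarrow> ('d::finite \<Rightarrow> int) \<Rightarrow> real) \<Rightarrow> nat
    \<Rightarrow> nat \<Rightarrow> nat \<Rightarrow> real" where
  "probT r p N k n = infsum (\<lambda>x. probTS r p N k n x) UNIV"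

definition UU :: "(nat \<Rightarrow> real) \<Rightarrow> (nat \<Rightarrow> ('d::finite \<Rightarrow> int) \<Rightarrow> real) \<Rightarrow> nat \<Rightarrow> real
    \<Rightarrow> nat \<Rightarrow> ('d \<Rightarrow> int) \<Rightarrow> real" where
  "UU r p N lam n x = (\<Sum>k. lam ^ k * probTS r p N k n x)"

definition U :: "(nat \<Rightarrow> real) \<Rightarrow> (nat \<Rightarrow> ('d::finite \<Rightarrow> int) \<Rightarrow> real) \<Rightarrow> nat \<Rightarrow> real
    \<Rightarrow> nat \<Rightarrow> real" where
  "U r p N lam n = (\<Sum>k. lam ^ k * probT r p N k n)"

end

theory Submission
  imports Defs
begin

text \<open>Given \<open>\<tau>\<^sub>k = n\<close>, the displacement \<open>S\<^sub>k\<close> is a sum of \<open>k\<close>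
  centred increments whose durations add up to \<open>n\<close>, and an increment of duration \<open>l\<close> has second
  moment at most \<open>K l\<close>. The cross terms vanish, so second moments add along convolution and
  \<open>E[|S\<^sub>k|\<^sup>2; \<tau>\<^sub>k = n] \<le> K n P(\<tau>\<^sub>k = n)\<close>. Summing over \<open>k\<close> with weights \<open>\<lambda>\<^sup>k\<close> gives
  \<open>\<Sum>\<^sub>x |x|\<^sup>2 U(n,x) \<le> K n U(n)\<close>, and Chebyshev's inequality yields the bound with \<open>C = K + 1\<close>.\<close>

lemma has_sum_sum:
  fixes f :: "'i \<Rightarrow> 'a \<Rightarrow> 'b::{topological_comm_monoid_add}"
  assumes "finite I" "\<And>i. i \<in> I \<Longrightarrow> (f i has_sum s i) A"
  shows "((\<lambda>x. \<Sum>i\<in>I. f i x) has_sum (\<Sum>i\<in>I. s i)) A"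
  using assms by (induction I rule: finite_induct) (auto intro!: has_sum_add)

lemma infsum_tail_le_second_moment:
  fixes f g :: "'a \<Rightarrow> real"
  assumes f_nonneg: "\<And>x. 0 \<le> f x" and f_summable: "f summable_on UNIV"
    and moment_summable: "(\<lambda>x. (g x)\<^sup>2 * f x) summable_on UNIV" and "0 < R"
  shows "infsum f {x. R < g x} \<le> infsum (\<lambda>x. (g x)\<^sup>2 * f x) UNIV / R\<^sup>2"
proof -
  have "infsum f {x. R < g x} \<le> infsum (\<lambda>x. (g x)\<^sup>2 * f x / R\<^sup>2) UNIV"
  proof (rule infsum_mono_neutral)
    show "f summable_on {x. R < g x}"
      using f_summable by (rule summable_on_subset_banach) simp
    show "(\<lambda>x. (g x)\<^sup>2 * f x / R\<^sup>2) summable_on UNIV"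
      using summable_on_cmult_left[OF moment_summable, of "1 / R\<^sup>2"] by simp
    show "f x \<le> (g x)\<^sup>2 * f x / R\<^sup>2" if "x \<in> {x. R < g x} \<inter> UNIV" for x
    proof -
      have "R\<^sup>2 \<le> (g x)\<^sup>2" using that \<open>0 < R\<close> by (intro power_mono) auto
      then have "R\<^sup>2 * f x \<le> (g x)\<^sup>2 * f x" using f_nonneg by (rule mult_right_mono)
      then show ?thesis using \<open>0 < R\<close> by (simp add: field_simps)
    qed
  qed (use f_nonneg in auto)
  also have "\<dots> = infsum (\<lambda>x. (g x)\<^sup>2 * f x) UNIV / R\<^sup>2"
    using infsum_cmult_left'[of "\<lambda>x. (g x)\<^sup>2 * f x" "1 / R\<^sup>2"] by simp
  finally show ?thesis .
qed

lemma znorm_power2: "(znorm x)\<^sup>2 = (\<Sum>i\<in>UNIV. (real_of_int (x i))\<^sup>2)"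
  unfolding znorm_def by (simp add: sum_nonneg)

lemma znorm_add_power2:
  "(znorm (\<lambda>i. y i + z i))\<^sup>2 = (znorm y)\<^sup>2 + 2 * (\<Sum>i\<in>UNIV. real_of_int (y i) * real_of_int (z i)) + (znorm z)\<^sup>2"
  unfolding znorm_power2 by (simp add: power2_sum sum.distrib sum_distrib_left algebra_simps)

text \<open>Tonelli for the convolution of \<open>Q\<close> and \<open>q\<close> tested against \<open>w\<close>: nonnegativity lets us
  sum over the increment \<open>z\<close> first.\<close>

lemma has_sum_convolution_weighted:
  fixes Q q w :: "('i \<Rightarrow> 'a::ab_group_add) \<Rightarrow> real"
  assumes Q_nonneg: "\<And>y. 0 \<le> Q y" and q_nonneg: "\<And>z. 0 \<le> q z" and w_nonneg: "\<And>x. 0 \<le> w x"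
    and slices: "\<And>y. ((\<lambda>z. Q y * q z * w (\<lambda>i. y i + z i)) has_sum h y) UNIV"
    and total: "(h has_sum S) UNIV"
  shows "((\<lambda>x. w x * infsum (\<lambda>y. Q y * q (\<lambda>i. x i - y i)) UNIV) has_sum S) UNIV"
proof -
  define F where "F = (\<lambda>(y, z). Q y * q z * w (\<lambda>i. y i + z i))"
  define G where "G x y = w x * (Q y * q (\<lambda>i. x i - y i))" for x y
  have "F summable_on UNIV \<times> UNIV"
    by (rule summable_on_SigmaI[where g=h])
      (use slices total Q_nonneg q_nonneg w_nonneg in \<open>auto simp: F_def summable_on_def\<close>)
  then have "(F has_sum S) (UNIV \<times> UNIV)"
    by (intro has_sum_SigmaI[where g=h]) (use slices total in \<open>auto simp: F_def\<close>)
  also have "?this \<longleftrightarrow> ((\<lambda>(x, y). G x y) has_sum S) (UNIV \<times> UNIV)"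
    by (rule has_sum_reindex_bij_witness[where i="\<lambda>(x, y). (y, \<lambda>i. x i - y i)"
          and j="\<lambda>(y, z). (\<lambda>i. y i + z i, y)"])
      (simp_all add: F_def G_def split_beta)
  finally have G_has_sum: "((\<lambda>(x, y). G x y) has_sum S) (UNIV \<times> UNIV)" .
  have "G x summable_on UNIV" for x
    using summable_on_SigmaD1[of G UNIV "\<lambda>_. UNIV" x] G_has_sum by (auto simp: summable_on_def)
  then have "((\<lambda>x. infsum (G x) UNIV) has_sum S) UNIV"
    by (intro has_sum_SigmaD[OF G_has_sum]) auto
  moreover have "infsum (G x) UNIV = w x * infsum (\<lambda>y. Q y * q (\<lambda>i. x i - y i)) UNIV" for x
    unfolding G_def by (rule infsum_cmult_right')
  ultimately show ?thesis by simp
qed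

text \<open>\<open>q l z\<close> is the weight of one step of duration \<open>l\<close> and displacement \<open>z\<close>. Since steps take
  positive time, \<open>convPow q k n\<close> vanishes for \<open>n < k\<close>, so the series over \<open>k\<close> defining
  \<open>U\<close> and \<open>UU\<close> are finite sums.\<close>

locale centered_kernel =
  fixes q :: "nat \<Rightarrow> ('d::finite \<Rightarrow> int) \<Rightarrow> real" and K :: real
  assumes nonneg: "\<And>l z. 0 \<le> q l z"
    and summable: "\<And>l. q l summable_on UNIV"
    and centered: "\<And>l i. ((\<lambda>z. real_of_int (z i) * q l z) has_sum 0) UNIV"
    and second_moment_summable: "\<And>l. (\<lambda>z. (znorm z)\<^sup>2 * q l z) summable_on UNIV"
    and second_moment_le: "\<And>l. infsum (\<lambda>z. (znorm z)\<^sup>2 * q l z) UNIV \<le> K * real l * infsum (q l) UNIV"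
    and no_instant_steps: "\<And>z. q 0 z = 0"
begin

text \<open>The cross term vanishes by centring: variances add.\<close>

lemma has_sum_shifted_second_moment:
  "((\<lambda>z. q l z * (znorm (\<lambda>i. y i + z i))\<^sup>2) has_sum
     (znorm y)\<^sup>2 * infsum (q l) UNIV + infsum (\<lambda>z. (znorm z)\<^sup>2 * q l z) UNIV) UNIV"
proof -
  have cross: "((\<lambda>z. \<Sum>i\<in>UNIV. real_of_int (y i) * (real_of_int (z i) * q l z)) has_sum 0) UNIV"
    using has_sum_sum[where I=UNIV and f="\<lambda>i z. real_of_int (y i) * (real_of_int (z i) * q l z)"
        and s="\<lambda>_. 0"]
      has_sum_cmult_right[OF centered] by simp
  have "((\<lambda>z. (znorm y)\<^sup>2 * q l z + 2 * (\<Sum>i\<in>UNIV. real_of_int (y i) * (real_of_int (z i) * q l z))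
      + (znorm z)\<^sup>2 * q l z)
      has_sum (znorm y)\<^sup>2 * infsum (q l) UNIV + 2 * 0 + infsum (\<lambda>z. (znorm z)\<^sup>2 * q l z) UNIV) UNIV"
    by (intro has_sum_add has_sum_cmult_right has_sum_infsum summable second_moment_summable cross)
  then show ?thesis
    by (simp add: znorm_add_power2 algebra_simps sum_distrib_left sum_distrib_right)
qed

lemma has_sum_convolution:
  assumes "\<And>y. 0 \<le> Q y" and "(Q has_sum T) UNIV"
  shows "((\<lambda>x. infsum (\<lambda>y. Q y * q l (\<lambda>i. x i - y i)) UNIV) has_sum T * infsum (q l) UNIV) UNIV"
proof -
  have "((\<lambda>x. 1 * infsum (\<lambda>y. Q y * q l (\<lambda>i. x i - y i)) UNIV) has_sum T * infsum (q l) UNIV) UNIV"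
  proof (rule has_sum_convolution_weighted)
    show "((\<lambda>z. Q y * q l z * 1) has_sum Q y * infsum (q l) UNIV) UNIV" for y
      using has_sum_cmult_right[OF has_sum_infsum[OF summable], where c="Q y"] by simp
    show "((\<lambda>y. Q y * infsum (q l) UNIV) has_sum T * infsum (q l) UNIV) UNIV"
      using assms(2) by (rule has_sum_cmult_left)
  qed (use assms nonneg in auto)
  then show ?thesis by simp
qed

lemma has_sum_convolution_second_moment:
  assumes "\<And>y. 0 \<le> Q y" and "(Q has_sum T) UNIV" and "((\<lambda>y. (znorm y)\<^sup>2 * Q y) has_sum W) UNIV"
  shows "((\<lambda>x. (znorm x)\<^sup>2 * infsum (\<lambda>y. Q y * q l (\<lambda>i. x i - y i)) UNIV) has_sum
           W * infsum (q l) UNIV + T * infsum (\<lambda>z. (znorm z)\<^sup>2 * q l z) UNIV) UNIV"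
proof (rule has_sum_convolution_weighted)
  show "((\<lambda>z. Q y * q l z * (znorm (\<lambda>i. y i + z i))\<^sup>2) has_sum
      Q y * ((znorm y)\<^sup>2 * infsum (q l) UNIV + infsum (\<lambda>z. (znorm z)\<^sup>2 * q l z) UNIV)) UNIV" for y
    using has_sum_cmult_right[OF has_sum_shifted_second_moment, where c="Q y"] by (simp add: mult.assoc)
  have "((\<lambda>y. (znorm y)\<^sup>2 * Q y * infsum (q l) UNIV + Q y * infsum (\<lambda>z. (znorm z)\<^sup>2 * q l z) UNIV)
      has_sum W * infsum (q l) UNIV + T * infsum (\<lambda>z. (znorm z)\<^sup>2 * q l z) UNIV) UNIV"
    by (intro has_sum_add has_sum_cmult_left assms)
  then show "((\<lambda>y. Q y * ((znorm y)\<^sup>2 * infsum (q l) UNIV + infsum (\<lambda>z. (znorm z)\<^sup>2 * q l z) UNIV))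
      has_sum W * infsum (q l) UNIV + T * infsum (\<lambda>z. (znorm z)\<^sup>2 * q l z) UNIV) UNIV"
    by (simp add: algebra_simps)
qed (use assms nonneg in auto)

lemma convPow_nonneg: "0 \<le> convPow q k n x"
  by (induction k arbitrary: n x) (auto intro!: sum_nonneg infsum_nonneg mult_nonneg_nonneg nonneg)

lemma convPow_eq_0: "n < k \<Longrightarrow> convPow q k n x = 0"
proof (induction k arbitrary: n x)
  case (Suc k)
  have "convPow q k m y * q (n - m) (\<lambda>i. x i - y i) = 0" if "m \<le> n" for m y
    using Suc that no_instant_steps by (cases "m = n") auto
  then show ?case by (auto intro!: sum.neutral infsum_0)
qed simp

lemma convPow_moments:
  "convPow q k n summable_on UNIV \<and> (\<lambda>x. (znorm x)\<^sup>2 * convPow q k n x) summable_on UNIV \<and>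
   infsum (\<lambda>x. (znorm x)\<^sup>2 * convPow q k n x) UNIV \<le> K * real n * infsum (convPow q k n) UNIV"
proof (induction k arbitrary: n)
  case 0
  have "finite {x. convPow q 0 n x \<noteq> 0}"
    by (rule finite_subset[of _ "{\<lambda>_. 0}"]) auto
  then have "convPow q 0 n summable_on UNIV"
    by (intro finite_nonzero_values_imp_summable_on) simp
  moreover have "(\<lambda>x. (znorm x)\<^sup>2 * convPow q 0 n x) = (\<lambda>_. 0)"
    by (auto simp: znorm_def)
  moreover have "K * real n * infsum (convPow q 0 n) UNIV = 0"
    by (cases "n = 0") auto
  ultimately show ?case by (simp only:) simp
next
  case (Suc k)
  define P where "P l = infsum (q l) UNIV" for l
  define V where "V l = infsum (\<lambda>z. (znorm z)\<^sup>2 * q l z) UNIV" for l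
  define T where "T m = infsum (convPow q k m) UNIV" for m
  define W where "W m = infsum (\<lambda>x. (znorm x)\<^sup>2 * convPow q k m x) UNIV" for m
  have T: "(convPow q k m has_sum T m) UNIV" and W: "((\<lambda>x. (znorm x)\<^sup>2 * convPow q k m x) has_sum W m) UNIV"
    and W_le: "W m \<le> K * real m * T m" for m
    using Suc.IH[of m] by (auto simp: T_def W_def)
  have mass: "(convPow q (Suc k) n has_sum (\<Sum>m\<le>n. T m * P (n - m))) UNIV"
    unfolding convPow.simps P_def
    by (intro has_sum_sum has_sum_convolution) (auto simp: convPow_nonneg T)
  have moment: "((\<lambda>x. (znorm x)\<^sup>2 * convPow q (Suc k) n x) has_sum
      (\<Sum>m\<le>n. W m * P (n - m) + T m * V (n - m))) UNIV"
    unfolding convPow.simps P_def V_def sum_distrib_left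
    by (intro has_sum_sum has_sum_convolution_second_moment) (auto simp: convPow_nonneg T W)
  have "(\<Sum>m\<le>n. W m * P (n - m) + T m * V (n - m)) \<le> K * real n * (\<Sum>m\<le>n. T m * P (n - m))"
    unfolding sum_distrib_left
  proof (rule sum_mono)
    fix m assume "m \<in> {..n}"
    then have n_split: "real n = real m + real (n - m)" by auto
    have "W m * P (n - m) \<le> K * real m * T m * P (n - m)"
      using W_le by (rule mult_right_mono) (auto simp: P_def intro: infsum_nonneg nonneg)
    moreover have "T m * V (n - m) \<le> T m * (K * real (n - m) * P (n - m))"
      using second_moment_le by (intro mult_left_mono) (auto simp: V_def P_def T_def intro: infsum_nonneg convPow_nonneg)
    ultimately show "W m * P (n - m) + T m * V (n - m) \<le> K * real n * (T m * P (n - m))"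
      unfolding n_split by (simp add: algebra_simps)
  qed
  with mass moment show ?case
    by (auto simp: summable_on_def infsumI)
qed

lemma weighted_convPow_moments:
  fixes n :: nat
  assumes "0 \<le> lam"
  defines "G \<equiv> \<lambda>x. \<Sum>k\<le>n. lam ^ k * convPow q k n x"
  shows "(G has_sum (\<Sum>k\<le>n. lam ^ k * infsum (convPow q k n) UNIV)) UNIV"
    and "(\<lambda>x. (znorm x)\<^sup>2 * G x) summable_on UNIV"
    and "infsum (\<lambda>x. (znorm x)\<^sup>2 * G x) UNIV \<le> K * real n * (\<Sum>k\<le>n. lam ^ k * infsum (convPow q k n) UNIV)"
proof -
  show "(G has_sum (\<Sum>k\<le>n. lam ^ k * infsum (convPow q k n) UNIV)) UNIV"
    unfolding G_def using convPow_moments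
    by (intro has_sum_sum has_sum_cmult_right has_sum_infsum) auto
  have moment_has_sum: "((\<lambda>x. (znorm x)\<^sup>2 * G x) has_sum
      (\<Sum>k\<le>n. lam ^ k * infsum (\<lambda>x. (znorm x)\<^sup>2 * convPow q k n x) UNIV)) UNIV"
    unfolding G_def sum_distrib_left using convPow_moments
    by (intro has_sum_sum) (auto simp: mult.left_commute intro!: has_sum_cmult_right has_sum_infsum)
  then show "(\<lambda>x. (znorm x)\<^sup>2 * G x) summable_on UNIV"
    by (rule has_sum_imp_summable)
  have "infsum (\<lambda>x. (znorm x)\<^sup>2 * G x) UNIV
      = (\<Sum>k\<le>n. lam ^ k * infsum (\<lambda>x. (znorm x)\<^sup>2 * convPow q k n x) UNIV)"
    using moment_has_sum by (rule infsumI)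
  also have "\<dots> \<le> (\<Sum>k\<le>n. lam ^ k * (K * real n * infsum (convPow q k n) UNIV))"
    using convPow_moments \<open>0 \<le> lam\<close> by (intro sum_mono mult_left_mono) auto
  also have "\<dots> = K * real n * (\<Sum>k\<le>n. lam ^ k * infsum (convPow q k n) UNIV)"
    by (simp add: sum_distrib_left mult.left_commute)
  finally show "infsum (\<lambda>x. (znorm x)\<^sup>2 * G x) UNIV
      \<le> K * real n * (\<Sum>k\<le>n. lam ^ k * infsum (convPow q k n) UNIV)" .
qed

lemma weighted_convPow_tail_le:
  assumes "0 \<le> lam" and "0 \<le> K" and "0 < M"
    and u_pos: "0 < (\<Sum>k. lam ^ k * infsum (convPow q k n) UNIV)"
  shows "infsum (\<lambda>x. (\<Sum>k. lam ^ k * convPow q k n x) / (\<Sum>k. lam ^ k * infsum (convPow q k n) UNIV))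
           {x. M * sqrt (real n) < znorm x} \<le> K / M\<^sup>2"
proof -
  define u where "u = (\<Sum>k. lam ^ k * infsum (convPow q k n) UNIV)"
  define G where "G = (\<lambda>x. \<Sum>k\<le>n. lam ^ k * convPow q k n x)"
  have G_eq: "(\<Sum>k. lam ^ k * convPow q k n x) = G x" for x
    unfolding G_def by (rule suminf_finite) (auto simp: convPow_eq_0)
  have u_eq: "u = (\<Sum>k\<le>n. lam ^ k * infsum (convPow q k n) UNIV)"
  proof (unfold u_def, rule suminf_finite)
    show "lam ^ k * infsum (convPow q k n) UNIV = 0" if "k \<notin> {..n}" for k
      using that by (simp add: infsum_0 convPow_eq_0)
  qed simp
  note moments = weighted_convPow_moments[OF \<open>0 \<le> lam\<close>, where n=n, folded G_def u_eq]
  have G_nonneg: "0 \<le> G x" for x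
    unfolding G_def using \<open>0 \<le> lam\<close> by (intro sum_nonneg mult_nonneg_nonneg convPow_nonneg) auto
  have "infsum (\<lambda>x. G x / u) {x. M * sqrt (real n) < znorm x} \<le> K / M\<^sup>2"
  proof (cases "n = 0")
    case True
    have "G x = 0" if "0 < znorm x" for x
      using that True by (auto simp: G_def znorm_def)
    with True have "infsum (\<lambda>x. G x / u) {x. M * sqrt (real n) < znorm x} = 0"
      by (intro infsum_0) auto
    with \<open>0 \<le> K\<close> show ?thesis by simp
  next
    case False
    have "infsum (\<lambda>x. G x / u) {x. M * sqrt (real n) < znorm x}
        \<le> infsum (\<lambda>x. (znorm x)\<^sup>2 * (G x / u)) UNIV / (M * sqrt (real n))\<^sup>2"
      using G_nonneg u_pos moments(1,2) False \<open>0 < M\<close>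
      by (intro infsum_tail_le_second_moment)
        (auto simp: u_def G_def summable_on_cmult_left' divide_inverse mult.assoc[symmetric]
          dest: has_sum_imp_summable)
    also have "\<dots> = infsum (\<lambda>x. (znorm x)\<^sup>2 * G x) UNIV / (u * M\<^sup>2 * real n)"
      using infsum_cmult_left'[of "\<lambda>x. (znorm x)\<^sup>2 * G x" "1 / u"]
      by (simp add: power_mult_distrib)
    also have "\<dots> \<le> K * real n * u / (u * M\<^sup>2 * real n)"
      using moments(3) u_pos \<open>0 < M\<close> by (intro divide_right_mono) (auto simp: u_def G_def)
    also have "\<dots> = K / M\<^sup>2"
      using False u_pos by (simp add: u_def)
    finally show ?thesis .
  qed
  then show ?thesis
    by (simp add: G_eq u_def)
qed

end

lemma centered_kernel_stepLaw:
  fixes r :: "nat \<Rightarrow> real" and p :: "nat \<Rightarrow> ('d::finite \<Rightarrow> int) \<Rightarrow> real"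
  assumes r_pos: "\<And>n. r n > 0"
    and p_nonneg: "\<And>n x. n \<ge> 1 \<Longrightarrow> p n x \<ge> 0"
    and p_prob: "\<And>n. n \<ge> 1 \<Longrightarrow> (p n has_sum 1) UNIV"
    and p_mean: "\<And>n i. n \<ge> 1 \<Longrightarrow> ((\<lambda>x. real_of_int (x i) * p n x) has_sum 0) UNIV"
    and p_moment: "\<And>n. n \<ge> 1 \<Longrightarrow> (\<lambda>x. (znorm x)\<^sup>2 * p n x) summable_on UNIV
                        \<and> infsum (\<lambda>x. (znorm x)\<^sup>2 * p n x) UNIV \<le> K * real n"
  shows "centered_kernel (stepLaw r p N) K"
proof -
  define c where "c l = r l / RR r N" for l
  have c_nonneg: "0 \<le> c l" for l
    unfolding c_def RR_def using r_pos by (intro divide_nonneg_nonneg sum_nonneg less_imp_le) auto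
  have in_range: "stepLaw r p N l = (\<lambda>x. c l * p l x)" if "1 \<le> l \<and> l \<le> N" for l
    using that by (auto simp: stepLaw_def c_def)
  have out_of_range: "stepLaw r p N l = (\<lambda>_. 0)" if "\<not> (1 \<le> l \<and> l \<le> N)" for l
    using that by (auto simp: stepLaw_def)
  have mass: "(stepLaw r p N l has_sum c l) UNIV" if "1 \<le> l \<and> l \<le> N" for l
    using has_sum_cmult_right[OF p_prob, where c="c l"] that by (simp add: in_range)
  show ?thesis
  proof unfold_locales
    fix l z show "0 \<le> stepLaw r p N l z"
      using c_nonneg p_nonneg by (cases "1 \<le> l \<and> l \<le> N") (simp_all add: in_range out_of_range)
  next
    fix l show "stepLaw r p N l summable_on UNIV"
      using mass has_sum_imp_summable by (cases "1 \<le> l \<and> l \<le> N") (auto simp: out_of_range)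
  next
    fix l i show "((\<lambda>z. real_of_int (z i) * stepLaw r p N l z) has_sum 0) UNIV"
      using has_sum_cmult_right[OF p_mean, where c="c l"]
      by (cases "1 \<le> l \<and> l \<le> N") (simp_all add: in_range out_of_range mult.left_commute)
  next
    fix l show "(\<lambda>z. (znorm z)\<^sup>2 * stepLaw r p N l z) summable_on UNIV"
      using summable_on_cmult_right[OF conjunct1[OF p_moment], where c="c l"]
      by (cases "1 \<le> l \<and> l \<le> N") (simp_all add: in_range out_of_range mult.left_commute)
  next
    fix l show "infsum (\<lambda>z. (znorm z)\<^sup>2 * stepLaw r p N l z) UNIV
        \<le> K * real l * infsum (stepLaw r p N l) UNIV"
    proof (cases "1 \<le> l \<and> l \<le> N")
      case True
      have "infsum (\<lambda>z. (znorm z)\<^sup>2 * stepLaw r p N l z) UNIV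
          = c l * infsum (\<lambda>z. (znorm z)\<^sup>2 * p l z) UNIV"
        unfolding in_range[OF True] by (simp add: mult.left_commute infsum_cmult_right')
      also have "\<dots> \<le> c l * (K * real l)"
        using p_moment True c_nonneg by (intro mult_left_mono) auto
      also have "\<dots> = K * real l * infsum (stepLaw r p N l) UNIV"
        using mass[OF True] by (simp add: infsumI)
      finally show ?thesis .
    qed (simp add: out_of_range)
  next
    fix z show "stepLaw r p N 0 z = 0" by (simp add: stepLaw_def)
  qed
qed

theorem mainTheorem9:
  fixes r :: "nat \<Rightarrow> real" and a c :: real
    and p :: "nat \<Rightarrow> ('d::finite \<Rightarrow> int) \<Rightarrow> real"
  assumes c_pos: "c > 0"
    and a_pos: "a > 0"
    and r_pos: "\<And>n. r n > 0"
    and r_asymp: "(\<lambda>n. real n * r n / a) \<longlonglongrightarrow> 1"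
    and p_nonneg: "\<And>n x. n \<ge> 1 \<Longrightarrow> p n x \<ge> 0"
    and p_prob: "\<And>n. n \<ge> 1 \<Longrightarrow> (p n has_sum 1) UNIV"
    and p_mean: "\<And>n i. n \<ge> 1 \<Longrightarrow> ((\<lambda>x. real_of_int (x i) * p n x) has_sum 0) UNIV"
    and p_var: "\<exists>K. \<forall>n\<ge>1. (\<lambda>x. (znorm x)^2 * p n x) summable_on UNIV
                    \<and> infsum (\<lambda>x. (znorm x)^2 * p n x) UNIV \<le> K * real n"
    and p_llt: "\<And>\<epsilon>. \<epsilon> > 0 \<Longrightarrow> \<forall>\<^sub>F n in sequentially. \<forall>x.
                  \<bar>real n powr (real CARD('d) / 2) * p n x - gauss_at c n x\<bar> \<le> \<epsilon>"
  shows "\<exists>C::real. C > 0 \<and> (\<forall>N lam n M. lam > 0 \<longrightarrow> U r p N lam n > 0 \<longrightarrow> M > 0 \<longrightarrow>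
           infsum (\<lambda>x. UU r p N lam n x / U r p N lam n) {x. znorm x > M * sqrt (real n)}
             \<le> C / M^2)"
proof -
  obtain K0 where K0: "\<forall>n\<ge>1. (\<lambda>x. (znorm x)\<^sup>2 * p n x) summable_on UNIV
                    \<and> infsum (\<lambda>x. (znorm x)\<^sup>2 * p n x) UNIV \<le> K0 * real n"
    using p_var by blast
  define K where "K = max K0 0"
  have p_moment: "(\<lambda>x. (znorm x)\<^sup>2 * p n x) summable_on UNIV
      \<and> infsum (\<lambda>x. (znorm x)\<^sup>2 * p n x) UNIV \<le> K * real n" if "n \<ge> 1" for n
    using K0 that order_trans[OF _ mult_right_mono[of K0 K "real n"]] by (auto simp: K_def)
  show ?thesis
  proof (intro exI[of _ "K + 1"] conjI allI impI)
    show "0 < K + 1" by (simp add: K_def)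
    fix N lam n and M :: real
    assume "0 < lam" and U_pos: "0 < U r p N lam n" and "0 < M"
    interpret centered_kernel "stepLaw r p N" K
      using r_pos p_nonneg p_prob p_mean p_moment by (rule centered_kernel_stepLaw)
    have "infsum (\<lambda>x. UU r p N lam n x / U r p N lam n) {x. znorm x > M * sqrt (real n)} \<le> K / M\<^sup>2"
      using weighted_convPow_tail_le[of lam M n] U_pos \<open>0 < lam\<close> \<open>0 < M\<close>
      unfolding UU_def U_def probT_def probTS_def by (simp add: K_def)
    also have "\<dots> \<le> (K + 1) / M\<^sup>2"
      by (simp add: divide_right_mono)
    finally show "infsum (\<lambda>x. UU r p N lam n x / U r p N lam n) {x. znorm x > M * sqrt (real n)}
        \<le> (K + 1) / M\<^sup>2" .
  qed
qed

end
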